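(* Let $A, B \in U(2)$ with $\det(A)\det(B) = 1$, and let $G(A,B)$ be the corresponding parity-preserving two-qubit unitary. Then there exist real numbers $\tau_1,\tau_2,\tau_3,\tau_4,a,b,c$ such that $$G(A,B) = G\bigl(R_z(\tau_1), R_z(\tau_2)\bigr)\, e^{\,i(a\, X\otimes X + b\, Y\otimes Y + c\, Z\otimes Z)}\, G\bigl(R_z(\tau_3), R_z(\tau_4)\bigr).$$
   Context: For $2\times 2$ matrices $A=(A_{ij})$ and $B=(B_{ij})$, $G(A,B)$ denotes the $4\times 4$ matrix, in the computational basis $\{|00\rangle,|01\rangle,|10\rangle,|11\rangle\}$ of two qubits, given by $$G(A,B)=\begin{pmatrix} A_{11}&0&0&A_{12}\\ 0&B_{11}&B_{12}&0\\ 0&B_{21}&B_{22}&0\\ A_{21}&0&0&A_{22}\end{pmatrix},$$ i.e. $A$ acts on the even-parity subspace spanned by $|00\rangle,|11\rangle$ and $B$ on the odd-parity subspace spanned by $|01\rangle,|10\rangle$. A parity-preserving (P.P.) unitary is a unitary of this form (so $A,B$ are unitary). $X,Y,Z$ are the Pauli matrices, and $R_z(\theta)=\mathrm{diag}(e^{i\theta},e^{-i\theta})$. *)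

theory Defs
  imports "Jordan_Normal_Form.Matrix" "Jordan_Normal_Form.Determinant" Complex_Main
begin

definition adj :: "complex mat \<Rightarrow> complex mat" where
  "adj A = mat (dim_col A) (dim_row A) (\<lambda>(i,j). cnj (A $$ (j,i)))"

definition unitary_mat :: "nat \<Rightarrow> complex mat \<Rightarrow> bool" where
  "unitary_mat n U \<longleftrightarrow> U \<in> carrier_mat n n \<and> adj U * U = 1\<^sub>m n \<and> U * adj U = 1\<^sub>m n"

definition kron :: "complex mat \<Rightarrow> complex mat \<Rightarrow> complex mat" where
  "kron A B = mat (dim_row A * dim_row B) (dim_col A * dim_col B)
     (\<lambda>(i,j). A $$ (i div dim_row B, j div dim_col B) * B $$ (i mod dim_row B, j mod dim_col B))"

definition mat_exp :: "complex mat \<Rightarrow> complex mat" where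
  "mat_exp M = mat (dim_row M) (dim_col M)
     (\<lambda>(i,j). \<Sum>k. ((M ^\<^sub>m k) $$ (i,j)) / of_nat (fact k))"

definition pauliX :: "complex mat" where
  "pauliX = mat_of_rows_list 2 [[0, 1], [1, 0]]"
definition pauliY :: "complex mat" where
  "pauliY = mat_of_rows_list 2 [[0, -\<i>], [\<i>, 0]]"
definition pauliZ :: "complex mat" where
  "pauliZ = mat_of_rows_list 2 [[1, 0], [0, -1]]"

definition Rz :: "real \<Rightarrow> complex mat" where
  "Rz \<theta> = mat_of_rows_list 2 [[exp (\<i> * of_real \<theta>), 0], [0, exp (- \<i> * of_real \<theta>)]]"

text \<open>G(A,B): A on span{|00>,|11>} (indices 0,3), B on span{|01>,|10>} (indices 1,2).\<close>
definition G :: "complex mat \<Rightarrow> complex mat \<Rightarrow> complex mat" where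
  "G A B = mat_of_rows_list 4
     [[A $$ (0,0), 0, 0, A $$ (0,1)],
      [0, B $$ (0,0), B $$ (0,1), 0],
      [0, B $$ (1,0), B $$ (1,1), 0],
      [A $$ (1,0), 0, 0, A $$ (1,1)]]"

end

(*
  Write det A = e^{2ic}, so that det B = e^{-2ic}.  Every U in U(2) with det U = e^{2ic} has an
  Euler decomposition U = R_z(s) e^{ic} [[cos p, i sin p], [i sin p, cos p]] R_z(t).  As G is
  multiplicative, this factors G(A,B) as G(R_z,R_z) G(M_A,M_B) G(R_z,R_z).  The generator
  i(a XX + b YY + c ZZ) is itself of the form G(-,-), both blocks being diagonal in the basis
  (1,1), (1,-1) with eigenvalues i(c +- (a - b)) and i(-c +- (a + b)); exponentiating blockwise
  yields G(M_A,M_B) for a - b = p_A and a + b = p_B.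
*)
theory Submission imports Defs begin

lemma mat2_eqI:
  assumes "A \<in> carrier_mat 2 2" "B \<in> carrier_mat 2 2"
    and "A $$ (0,0) = B $$ (0,0)" "A $$ (0,1) = B $$ (0,1)"
    and "A $$ (1,0) = B $$ (1,0)" "A $$ (1,1) = B $$ (1,1)"
  shows "A = B"
proof (rule eq_matI)
  fix i j assume "i < dim_row B" "j < dim_col B"
  then have "i \<in> {0,1}" "j \<in> {0,1}" using assms(2) by auto
  then show "A $$ (i,j) = B $$ (i,j)" using assms(3-) by auto
qed (use assms in auto)

lemma mat4_eqI:
  assumes "A \<in> carrier_mat 4 4" "B \<in> carrier_mat 4 4"
    and "\<And>i j. i \<in> {0,1,2,3} \<Longrightarrow> j \<in> {0,1,2,3} \<Longrightarrow> A $$ (i,j) = B $$ (i,j)"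
  shows "A = B"
proof (rule eq_matI)
  fix i j assume "i < dim_row B" "j < dim_col B"
  then have "i \<in> {0,1,2,3}" "j \<in> {0,1,2,3}" using assms(2) by auto
  then show "A $$ (i,j) = B $$ (i,j)" by (rule assms(3))
qed (use assms in auto)

lemma index_mult_mat_2:
  assumes "A \<in> carrier_mat 2 2" "B \<in> carrier_mat 2 2" "i < 2" "j < 2"
  shows "(A * B) $$ (i,j) = A $$ (i,0) * B $$ (0,j) + A $$ (i,1) * B $$ (1,j)"
  using assms by (auto simp: scalar_prod_def numeral_eq_Suc atLeast0_lessThan_Suc algebra_simps)

lemma index_mult_mat_4:
  assumes "A \<in> carrier_mat 4 4" "B \<in> carrier_mat 4 4" "i < 4" "j < 4"
  shows "(A * B) $$ (i,j) = A $$ (i,0) * B $$ (0,j) + A $$ (i,1) * B $$ (1,j)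
                          + A $$ (i,2) * B $$ (2,j) + A $$ (i,3) * B $$ (3,j)"
  using assms by (auto simp: scalar_prod_def numeral_eq_Suc atLeast0_lessThan_Suc algebra_simps)

lemma dim_mat_of_rows_list [simp]:
  "dim_row (mat_of_rows_list nc rs) = length rs" "dim_col (mat_of_rows_list nc rs) = nc"
  by (simp_all add: mat_of_rows_list_def)

lemma index_mat_of_rows_list [simp]:
  "i < length rs \<Longrightarrow> j < nc \<Longrightarrow> mat_of_rows_list nc rs $$ (i,j) = rs ! i ! j"
  by (simp add: mat_of_rows_list_def)

lemma mat_of_rows_list_carrier [simp]:
  "length rs = nr \<Longrightarrow> mat_of_rows_list nc rs \<in> carrier_mat nr nc"
  by (simp add: mat_of_rows_list_def)

lemma dim_G [simp]: "dim_row (G A B) = 4" "dim_col (G A B) = 4"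
  unfolding G_def by simp_all

lemma G_carrier [simp]: "G A B \<in> carrier_mat 4 4"
  by (rule carrier_matI) simp_all

lemma index_G:
  "i < 4 \<Longrightarrow> j < 4 \<Longrightarrow> G A B $$ (i,j) =
     [[A $$ (0,0), 0, 0, A $$ (0,1)],
      [0, B $$ (0,0), B $$ (0,1), 0],
      [0, B $$ (1,0), B $$ (1,1), 0],
      [A $$ (1,0), 0, 0, A $$ (1,1)]] ! i ! j"
  unfolding G_def by simp

lemma G_mult:
  assumes "A \<in> carrier_mat 2 2" "B \<in> carrier_mat 2 2" "C \<in> carrier_mat 2 2" "D \<in> carrier_mat 2 2"
  shows "G A B * G C D = G (A * C) (B * D)"
proof (rule mat4_eqI[OF mult_carrier_mat[OF G_carrier G_carrier] G_carrier])
  fix i j :: nat assume "i \<in> {0,1,2,3}" "j \<in> {0,1,2,3}"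
  then show "(G A B * G C D) $$ (i,j) = G (A * C) (B * D) $$ (i,j)"
    by (elim insertE emptyE; simp add: index_mult_mat_4 index_G
        index_mult_mat_2[OF assms(1,3)] index_mult_mat_2[OF assms(2,4)] del: index_mult_mat)
qed

lemma G_one: "G (1\<^sub>m 2) (1\<^sub>m 2) = 1\<^sub>m 4"
proof (rule mat4_eqI[OF G_carrier one_carrier_mat])
  fix i j :: nat assume "i \<in> {0,1,2,3}" "j \<in> {0,1,2,3}"
  then show "G (1\<^sub>m 2) (1\<^sub>m 2) $$ (i,j) = 1\<^sub>m 4 $$ (i,j)"
    by (elim insertE emptyE; simp add: index_G)
qed

lemma G_pow:
  assumes "A \<in> carrier_mat 2 2" "B \<in> carrier_mat 2 2"
  shows "G A B ^\<^sub>m k = G (A ^\<^sub>m k) (B ^\<^sub>m k)"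
proof (induction k)
  case 0
  show ?case using assms by (simp add: G_one)
next
  case (Suc k)
  then show ?case using assms by (simp add: G_mult)
qed

lemma mat_exp_G:
  assumes "A \<in> carrier_mat 2 2" "B \<in> carrier_mat 2 2"
  shows "mat_exp (G A B) = G (mat_exp A) (mat_exp B)"
proof (rule mat4_eqI)
  show "mat_exp (G A B) \<in> carrier_mat 4 4"
    by (rule carrier_matI) (simp_all add: mat_exp_def)
  fix i j :: nat assume "i \<in> {0,1,2,3}" "j \<in> {0,1,2,3}"
  then show "mat_exp (G A B) $$ (i,j) = G (mat_exp A) (mat_exp B) $$ (i,j)"
    using assms by (elim insertE emptyE; simp add: mat_exp_def G_pow index_G)
qed simp

text \<open>\<open>hadamard_diag x y\<close> is \<open>H diag(x,y) H\<close> for the normalised Hadamard matrix \<open>H\<close>: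
  it has eigenvalue \<open>x\<close> on \<open>(1,1)\<close> and \<open>y\<close> on \<open>(1,-1)\<close>.\<close>

definition hadamard_diag :: "complex \<Rightarrow> complex \<Rightarrow> complex mat" where
  "hadamard_diag x y = mat_of_rows_list 2 [[(x + y) / 2, (x - y) / 2], [(x - y) / 2, (x + y) / 2]]"

lemma dim_hadamard_diag [simp]: "dim_row (hadamard_diag x y) = 2" "dim_col (hadamard_diag x y) = 2"
  by (simp_all add: hadamard_diag_def)

lemma hadamard_diag_carrier [simp]: "hadamard_diag x y \<in> carrier_mat 2 2"
  by (rule carrier_matI) simp_all

text \<open>Entry lemmas are stated with \<open>Suc 0\<close>, the simp normal form of the index \<open>1\<close>.\<close>

lemma index_hadamard_diag [simp]:
  "hadamard_diag x y $$ (0,0) = (x + y) / 2" "hadamard_diag x y $$ (0,Suc 0) = (x - y) / 2"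
  "hadamard_diag x y $$ (Suc 0,0) = (x - y) / 2" "hadamard_diag x y $$ (Suc 0,Suc 0) = (x + y) / 2"
  by (simp_all add: hadamard_diag_def)

lemma hadamard_diag_mult: "hadamard_diag x y * hadamard_diag u v = hadamard_diag (x * u) (y * v)"
  by (rule mat2_eqI[OF mult_carrier_mat[OF hadamard_diag_carrier hadamard_diag_carrier]])
    (simp_all add: index_mult_mat_2 field_simps del: index_mult_mat)

lemma hadamard_diag_pow: "hadamard_diag x y ^\<^sub>m k = hadamard_diag (x ^ k) (y ^ k)"
proof (induction k)
  case 0
  show ?case by (rule mat2_eqI) simp_all
next
  case (Suc k)
  then show ?case by (simp add: hadamard_diag_mult mult.commute)
qed

lemma suminf_exp_lincomb:
  fixes a b x y :: complex
  shows "(\<Sum>k. (a * x ^ k + b * y ^ k) / fact k) = a * exp x + b * exp y"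
proof -
  have "(\<lambda>k. x ^ k / fact k) sums exp x" for x :: complex
    using exp_converges[of x] by (simp add: scaleR_conv_of_real divide_inverse mult.commute)
  then have "(\<lambda>k. a * (x ^ k / fact k) + b * (y ^ k / fact k)) sums (a * exp x + b * exp y)"
    by (intro sums_add sums_mult)
  then show ?thesis
    by (simp add: sums_iff add_divide_distrib)
qed

lemma mat_exp_hadamard_diag: "mat_exp (hadamard_diag x y) = hadamard_diag (exp x) (exp y)"
proof -
  have "(\<Sum>k. ((x ^ k + s * y ^ k) / 2) / fact k) = (exp x + s * exp y) / 2" for s
    using suminf_exp_lincomb[of "1/2" x "s/2" y] by (simp add: field_simps)
  from this[of 1] this[of "-1"] show ?thesis
    by (intro mat2_eqI) (auto simp: mat_exp_def hadamard_diag_pow)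
qed

lemma dim_kron [simp]:
  "dim_row (kron A B) = dim_row A * dim_row B" "dim_col (kron A B) = dim_col A * dim_col B"
  by (simp_all add: kron_def)

lemma index_kron:
  "i < dim_row A * dim_row B \<Longrightarrow> j < dim_col A * dim_col B \<Longrightarrow>
   kron A B $$ (i,j) = A $$ (i div dim_row B, j div dim_col B) * B $$ (i mod dim_row B, j mod dim_col B)"
  by (simp add: kron_def)

lemma dim_pauli [simp]:
  "dim_row pauliX = 2" "dim_col pauliX = 2" "dim_row pauliY = 2" "dim_col pauliY = 2"
  "dim_row pauliZ = 2" "dim_col pauliZ = 2"
  by (simp_all add: pauliX_def pauliY_def pauliZ_def)

lemma index_pauli [simp]:
  "pauliX $$ (0,0) = 0" "pauliX $$ (0,Suc 0) = 1" "pauliX $$ (Suc 0,0) = 1" "pauliX $$ (Suc 0,Suc 0) = 0"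
  "pauliY $$ (0,0) = 0" "pauliY $$ (0,Suc 0) = -\<i>" "pauliY $$ (Suc 0,0) = \<i>" "pauliY $$ (Suc 0,Suc 0) = 0"
  "pauliZ $$ (0,0) = 1" "pauliZ $$ (0,Suc 0) = 0" "pauliZ $$ (Suc 0,0) = 0" "pauliZ $$ (Suc 0,Suc 0) = -1"
  by (simp_all add: pauliX_def pauliY_def pauliZ_def)

lemma xx_yy_zz_eq_G:
  fixes a b c :: real
  shows "\<i> \<cdot>\<^sub>m (of_real a \<cdot>\<^sub>m kron pauliX pauliX + of_real b \<cdot>\<^sub>m kron pauliY pauliY
                + of_real c \<cdot>\<^sub>m kron pauliZ pauliZ)
    = G (hadamard_diag (\<i> * of_real (c + (a - b))) (\<i> * of_real (c - (a - b))))
        (hadamard_diag (\<i> * of_real (- c + (a + b))) (\<i> * of_real (- c - (a + b))))"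
proof (rule mat4_eqI[OF _ G_carrier])
  show "\<i> \<cdot>\<^sub>m (of_real a \<cdot>\<^sub>m kron pauliX pauliX + of_real b \<cdot>\<^sub>m kron pauliY pauliY
                + of_real c \<cdot>\<^sub>m kron pauliZ pauliZ) \<in> carrier_mat 4 4"
    by (rule carrier_matI) simp_all
  fix i j :: nat assume "i \<in> {0,1,2,3}" "j \<in> {0,1,2,3}"
  then show "(\<i> \<cdot>\<^sub>m (of_real a \<cdot>\<^sub>m kron pauliX pauliX + of_real b \<cdot>\<^sub>m kron pauliY pauliY
                + of_real c \<cdot>\<^sub>m kron pauliZ pauliZ)) $$ (i,j)
    = G (hadamard_diag (\<i> * of_real (c + (a - b))) (\<i> * of_real (c - (a - b))))
        (hadamard_diag (\<i> * of_real (- c + (a + b))) (\<i> * of_real (- c - (a + b)))) $$ (i,j)"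
    by (elim insertE emptyE; simp add: index_kron index_G algebra_simps)
qed

lemma mat_exp_xx_yy_zz:
  fixes a b c :: real
  shows "mat_exp (\<i> \<cdot>\<^sub>m (of_real a \<cdot>\<^sub>m kron pauliX pauliX + of_real b \<cdot>\<^sub>m kron pauliY pauliY
                        + of_real c \<cdot>\<^sub>m kron pauliZ pauliZ))
    = G (hadamard_diag (cis (c + (a - b))) (cis (c - (a - b))))
        (hadamard_diag (cis (- c + (a + b))) (cis (- c - (a + b))))"
  by (simp add: xx_yy_zz_eq_G mat_exp_G mat_exp_hadamard_diag cis_conv_exp)

lemma Rz_carrier [simp]: "Rz t \<in> carrier_mat 2 2"
  by (rule carrier_matI) (simp_all add: Rz_def)

lemma index_Rz [simp]:
  "Rz t $$ (0,0) = cis t" "Rz t $$ (0,Suc 0) = 0" "Rz t $$ (Suc 0,0) = 0" "Rz t $$ (Suc 0,Suc 0) = cis (- t)"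
  by (simp_all add: Rz_def cis_conv_exp)

lemma det_2:
  assumes "A \<in> carrier_mat 2 2"
  shows "det A = A $$ (0,0) * A $$ (1,1) - A $$ (0,1) * A $$ (1,0)"
  using assms
  apply (subst laplace_expansion_column[of A 2 0])
    apply (auto simp: cofactor_def mat_delete_def numeral_2_eq_2 lessThan_Suc)
  apply (subst (1 2) det_upper_triangular[of _ 1])
     apply (auto simp: upper_triangular_def diag_mat_def)
  done

lemma dim_adj [simp]: "dim_row (adj A) = dim_col A" "dim_col (adj A) = dim_row A"
  by (simp_all add: adj_def)

lemma index_adj [simp]: "i < dim_col A \<Longrightarrow> j < dim_row A \<Longrightarrow> adj A $$ (i,j) = cnj (A $$ (j,i))"
  by (simp add: adj_def)

lemma unitary_2_rows:
  assumes "unitary_mat 2 U"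
  shows "U $$ (0,0) * cnj (U $$ (0,0)) + U $$ (0,1) * cnj (U $$ (0,1)) = 1"
    and "U $$ (1,0) * cnj (U $$ (0,0)) + U $$ (1,1) * cnj (U $$ (0,1)) = 0"
    and "U $$ (1,0) * cnj (U $$ (1,0)) + U $$ (1,1) * cnj (U $$ (1,1)) = 1"
proof -
  have U: "U \<in> carrier_mat 2 2" and UU: "U * adj U = 1\<^sub>m 2"
    using assms unfolding unitary_mat_def by auto
  have adjU: "adj U \<in> carrier_mat 2 2"
    using U by (intro carrier_matI) auto
  have "U $$ (i,0) * cnj (U $$ (j,0)) + U $$ (i,1) * cnj (U $$ (j,1)) = 1\<^sub>m 2 $$ (i,j)"
    if "i < 2" "j < 2" for i j
    using index_mult_mat_2[OF U adjU that] that U unfolding UU by simp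
  from this[of 0 0] this[of 1 0] this[of 1 1] show
    "U $$ (0,0) * cnj (U $$ (0,0)) + U $$ (0,1) * cnj (U $$ (0,1)) = 1"
    "U $$ (1,0) * cnj (U $$ (0,0)) + U $$ (1,1) * cnj (U $$ (0,1)) = 0"
    "U $$ (1,0) * cnj (U $$ (1,0)) + U $$ (1,1) * cnj (U $$ (1,1)) = 1"
    by simp_all
qed

lemma unitary_2_second_row:
  assumes "unitary_mat 2 U"
  shows "U $$ (1,1) = det U * cnj (U $$ (0,0))" and "U $$ (1,0) = - det U * cnj (U $$ (0,1))"
proof -
  have det: "det U = U $$ (0,0) * U $$ (1,1) - U $$ (0,1) * U $$ (1,0)"
    using assms unfolding unitary_mat_def by (simp add: det_2)
  note rows = unitary_2_rows[OF assms]
  have "det U * cnj (U $$ (0,0)) = U $$ (1,1) * (U $$ (0,0) * cnj (U $$ (0,0)) + U $$ (0,1) * cnj (U $$ (0,1)))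
      - U $$ (0,1) * (U $$ (1,0) * cnj (U $$ (0,0)) + U $$ (1,1) * cnj (U $$ (0,1)))"
    unfolding det by (simp add: algebra_simps)
  then show "U $$ (1,1) = det U * cnj (U $$ (0,0))"
    using rows by simp
  have "det U * cnj (U $$ (0,1)) = U $$ (0,0) * (U $$ (1,0) * cnj (U $$ (0,0)) + U $$ (1,1) * cnj (U $$ (0,1)))
      - U $$ (1,0) * (U $$ (0,0) * cnj (U $$ (0,0)) + U $$ (0,1) * cnj (U $$ (0,1)))"
    unfolding det by (simp add: algebra_simps)
  then show "U $$ (1,0) = - det U * cnj (U $$ (0,1))"
    using rows by simp
qed

lemma unitary_2_first_row_norm:
  assumes "unitary_mat 2 U"
  shows "cmod (U $$ (0,0)) ^ 2 + cmod (U $$ (0,1)) ^ 2 = 1"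
proof -
  have "complex_of_real (cmod (U $$ (0,0)) ^ 2 + cmod (U $$ (0,1)) ^ 2) = 1"
    using unitary_2_rows(1)[OF assms] by (simp only: of_real_add complex_norm_square)
  then show ?thesis
    using of_real_eq_1_iff by blast
qed

lemma unitary_2_cmod_det:
  assumes "unitary_mat 2 U"
  shows "cmod (det U) = 1"
proof -
  have "det U * cnj (det U) * (U $$ (0,0) * cnj (U $$ (0,0)) + U $$ (0,1) * cnj (U $$ (0,1))) = 1"
    using unitary_2_rows(3)[OF assms] unfolding unitary_2_second_row[OF assms]
    by (simp add: algebra_simps)
  then have "complex_of_real (cmod (det U) ^ 2) = 1"
    unfolding unitary_2_rows(1)[OF assms] complex_norm_square by simp
  then have "cmod (det U) ^ 2 = 1"
    using of_real_eq_1_iff by blast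
  then show ?thesis
    using norm_ge_zero[of "det U"] by (auto simp: power2_eq_1_iff)
qed

lemma unit_pair_polar:
  fixes \<alpha> \<beta> :: complex
  assumes "cmod \<alpha> ^ 2 + cmod \<beta> ^ 2 = 1"
  obtains p u v :: real where "\<alpha> = cos p * cis u" and "\<beta> = sin p * cis v"
proof
  have le1: "\<bar>cmod \<alpha>\<bar> \<le> 1"
    using assms abs_square_le_1 by (metis abs_norm_cancel le_add_same_cancel1 zero_le_power2)
  show "\<alpha> = cos (arccos (cmod \<alpha>)) * cis (Arg \<alpha>)"
    unfolding cos_arccos_abs[OF le1] by (metis rcis_cmod_Arg rcis_def)
  have "sin (arccos (cmod \<alpha>)) = cmod \<beta>"
  proof -
    have "1 - cmod \<alpha> ^ 2 = cmod \<beta> ^ 2"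
      using assms by simp
    then show ?thesis
      unfolding sin_arccos_abs[OF le1] by simp
  qed
  then show "\<beta> = sin (arccos (cmod \<alpha>)) * cis (Arg \<beta>)"
    by (metis rcis_cmod_Arg rcis_def)
qed

lemma Rz_mult_mult_Rz:
  assumes "M \<in> carrier_mat 2 2"
  shows "Rz s * M * Rz t = mat_of_rows_list 2
    [[cis s * M $$ (0,0) * cis t, cis s * M $$ (0,1) * cis (- t)],
     [cis (- s) * M $$ (1,0) * cis t, cis (- s) * M $$ (1,1) * cis (- t)]]"
proof -
  have RzM: "Rz s * M \<in> carrier_mat 2 2"
    by (rule mult_carrier_mat[OF Rz_carrier assms])
  show ?thesis
    by (rule mat2_eqI[OF mult_carrier_mat[OF RzM Rz_carrier]])
      (simp_all add: index_mult_mat_2[OF RzM Rz_carrier] index_mult_mat_2[OF Rz_carrier assms]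
        del: index_mult_mat)
qed

lemma cis_mean: "(cis (c + p) + cis (c - p)) / 2 = of_real (cos p) * cis c"
  by (simp add: complex_eq_iff cos_add sin_add cos_diff sin_diff)

lemma cis_half_diff: "(cis (c + p) - cis (c - p)) / 2 = of_real (sin p) * cis (c + pi / 2)"
  by (simp add: complex_eq_iff cos_add sin_add cos_diff sin_diff)

lemma unitary_2_euler_decomposition:
  assumes "unitary_mat 2 U" and "det U = cis (2 * c)"
  obtains s t p where "U = Rz s * hadamard_diag (cis (c + p)) (cis (c - p)) * Rz t"
proof -
  obtain p u v :: real where a: "U $$ (0,0) = cos p * cis u" and b: "U $$ (0,1) = sin p * cis v"
    using unit_pair_polar[OF unitary_2_first_row_norm[OF assms(1)]] .
  have d: "U $$ (1,1) = cos p * cis (2 * c - u)"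
    using unitary_2_second_row(1)[OF assms(1)] unfolding a assms(2)
    by (simp add: cis_cnj cis_mult mult_ac)
  have "cis (2 * c - v + pi) = cis (2 * c) * cis (- v) * cis pi"
    by (simp only: cis_mult) simp
  then have c: "U $$ (1,0) = sin p * cis (2 * c - v + pi)"
    using unitary_2_second_row(2)[OF assms(1)] unfolding b assms(2)
    by (simp add: cis_cnj mult_ac)
  have phase: "cis x * (r * cis y) * cis z = r * cis w" if "x + y + z = w" for x y z w r
  proof -
    have "cis w = cis x * cis y * cis z"
      unfolding that[symmetric] by (simp add: cis_mult)
    then show ?thesis
      by (simp add: mult_ac)
  qed
  \<comment> \<open>\<open>s + t\<close> and \<open>s - t\<close> are dictated by the phases \<open>u\<close>, \<open>v\<close> of the first row.\<close>
  define s where "s = (u + v) / 2 - c - pi / 4"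
  define t where "t = (u - v) / 2 + pi / 4"
  have U: "U \<in> carrier_mat 2 2"
    using assms(1) unfolding unitary_mat_def by simp
  have "U $$ (0,0) = cis s * ((cis (c + p) + cis (c - p)) / 2) * cis t"
    unfolding cis_mean a by (rule phase[symmetric]) (simp add: s_def t_def field_simps)
  moreover have "U $$ (0,1) = cis s * ((cis (c + p) - cis (c - p)) / 2) * cis (- t)"
    unfolding cis_half_diff b by (rule phase[symmetric]) (simp add: s_def t_def field_simps)
  moreover have "U $$ (1,0) = cis (- s) * ((cis (c + p) - cis (c - p)) / 2) * cis t"
    unfolding cis_half_diff c by (rule phase[symmetric]) (simp add: s_def t_def field_simps)
  moreover have "U $$ (1,1) = cis (- s) * ((cis (c + p) + cis (c - p)) / 2) * cis (- t)"
    unfolding cis_mean d by (rule phase[symmetric]) (simp add: s_def t_def field_simps)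
  ultimately have "U = Rz s * hadamard_diag (cis (c + p)) (cis (c - p)) * Rz t"
    unfolding Rz_mult_mult_Rz[OF hadamard_diag_carrier] by (auto intro!: mat2_eqI[OF U])
  then show ?thesis
    using that by blast
qed

theorem lemma1:
  fixes A B :: "complex mat"
  assumes "unitary_mat 2 A" and "unitary_mat 2 B"
    and "det A * det B = 1"
  shows "\<exists>\<tau>1 \<tau>2 \<tau>3 \<tau>4 a b c :: real.
     G A B = G (Rz \<tau>1) (Rz \<tau>2)
       * mat_exp (\<i> \<cdot>\<^sub>m (of_real a \<cdot>\<^sub>m kron pauliX pauliX
                          + of_real b \<cdot>\<^sub>m kron pauliY pauliY
                          + of_real c \<cdot>\<^sub>m kron pauliZ pauliZ))
       * G (Rz \<tau>3) (Rz \<tau>4)"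
proof -
  define c where "c = Arg (det A) / 2"
  have det_A: "det A = cis (2 * c)"
    using rcis_cmod_Arg[of "det A"] unitary_2_cmod_det[OF assms(1)] by (simp add: c_def rcis_def)
  have det_B: "det B = cis (2 * - c)"
    using inverse_unique[OF assms(3)] det_A by simp
  obtain s1 t1 p where A: "A = Rz s1 * hadamard_diag (cis (c + p)) (cis (c - p)) * Rz t1"
    using unitary_2_euler_decomposition[OF assms(1) det_A] .
  obtain s2 t2 q where B: "B = Rz s2 * hadamard_diag (cis (- c + q)) (cis (- c - q)) * Rz t2"
    using unitary_2_euler_decomposition[OF assms(2) det_B] .
  define a b where "a = (p + q) / 2" and "b = (q - p) / 2"
  have "p = a - b" and "q = a + b"
    by (simp_all add: a_def b_def field_simps)
  have Rz_hadamard_diag: "Rz s * hadamard_diag x y \<in> carrier_mat 2 2" for s x y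
    by (rule mult_carrier_mat[OF Rz_carrier hadamard_diag_carrier])
  have "G A B = G (Rz s1) (Rz s2)
      * G (hadamard_diag (cis (c + (a - b))) (cis (c - (a - b))))
          (hadamard_diag (cis (- c + (a + b))) (cis (- c - (a + b))))
      * G (Rz t1) (Rz t2)"
    unfolding A B \<open>p = a - b\<close> \<open>q = a + b\<close> by (simp add: G_mult Rz_hadamard_diag)
  then show ?thesis
    unfolding mat_exp_xx_yy_zz[symmetric] by blast
qed

end
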